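(* Fix $\theta\in\mathbb{R}$ (playing the role of $at$). There exists $C>0$ such that for every grid size $N\in\mathbb{N}$ there exists a ReLU FNO $\mathcal{N}^{\mathrm{FNO}}$ with $k_{\max}=1$, $d_v\le C$, depth $\le C$, size $\le C$ such that \[ \sup_{h,w,\xi}\sup_{x\in\mathbb{T}}\big|\mathcal{N}^{\mathrm{FNO}}(\bar u)(x)-\sin(w/2)\cos(x-\xi-\theta)\big|\le\frac CN, \] where $\bar u=h\,1_{[-w/2,w/2]}(\cdot-\xi)$ and the supremum is over $h\in[\underline h,\overline h]$, $w\in[\underline w,\overline w]$, $\xi\in[0,2\pi]$.
   Context: $\mathbb{T}=\mathbb{R}/2\pi\mathbb{Z}$; fixed $0<\underline h\le\overline h$, $0<\underline w\le\overline w<2\pi$; $1_{[-w/2,w/2]}$ is periodized. FNO with grid size $N$: $x_j=2\pi j/N$, $\mathcal{F}_Nv(k)=\frac1N\sum_{j=1}^Nv(x_j)e^{-ikx_j}$; an FNO with lifting dimension $d_v$, cut-off $k_{\max}$, depth $L$, ReLU $\sigma$ is $Q\circ\mathcal{L}_L\circ\dots\circ\mathcal{L}_1\circ R$, $(R\bar u)(x)=R(\bar u(x),x)$ ($R$ a shallow ReLU network into $\mathbb{R}^{d_v}$), $(\mathcal{L}_\ell v)(x)=\sigma(W_\ell v(x)+b_\ell(x)+\sum_{|k|\le k_{\max}}P_\ell(k)\mathcal{F}_Nv(k)e^{ikx})$ with $W_\ell\in\mathbb{R}^{d_v\times d_v}$, $P_\ell(k)\in\mathbb{C}^{d_v\times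 d_v}$, real bias $b_\ell(x)=\sum_{|k|\le k_{\max}}\hat b_\ell(k)e^{ikx}$, $Q$ linear pointwise; outputs are defined for all $x\in\mathbb{T}$. Depth $=L$; size = number of tunable parameters. *)

theory Defs
  imports Complex_Main
begin

definition relu :: "real \<Rightarrow> real" where
  "relu t = max 0 t"

definition per_ind :: "real \<Rightarrow> real \<Rightarrow> real" where
  "per_ind w y = (if \<exists>k::int. \<bar>y - 2 * pi * of_int k\<bar> \<le> w / 2 then 1 else 0)"

definition box_input :: "real \<Rightarrow> real \<Rightarrow> real \<Rightarrow> real \<Rightarrow> real" where
  "box_input h w xi x = h * per_ind w (x - xi)"

text \<open>Vectors in R^dv are
  functions nat => real (indices < dv), matrices nat => nat => _.
  Lifting R is a shallow ReLU network (one hidden layer of width r_width)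
  R(u,x) = RB * relu(RA * (u,x) + Rc) + Rd.
  Layer l (l < depth) has W l, Fourier multipliers P l k (|k| <= kmax) and
  bias Fourier coefficients bhat l k; Q is a linear functional on R^dv.\<close>
record fno =
  dv :: nat
  kmax :: nat
  depth :: nat
  r_width :: nat
  RA :: "nat \<Rightarrow> nat \<Rightarrow> real"
  Rc :: "nat \<Rightarrow> real"
  RB :: "nat \<Rightarrow> nat \<Rightarrow> real"
  Rd :: "nat \<Rightarrow> real"
  Wm :: "nat \<Rightarrow> nat \<Rightarrow> nat \<Rightarrow> real"
  Pm :: "nat \<Rightarrow> int \<Rightarrow> nat \<Rightarrow> nat \<Rightarrow> complex"
  bhat :: "nat \<Rightarrow> int \<Rightarrow> nat \<Rightarrow> complex"
  Qv :: "nat \<Rightarrow> real"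

text \<open>Number of tunable real parameters (complex entries count twice).\<close>
definition fno_size :: "fno \<Rightarrow> nat" where
  "fno_size F =
     3 * r_width F + dv F * (r_width F + 1)
   + depth F * (dv F * dv F + 2 * (2 * kmax F + 1) * dv F * dv F + 2 * (2 * kmax F + 1) * dv F)
   + dv F"

definition fno_lift :: "fno \<Rightarrow> (real \<Rightarrow> real) \<Rightarrow> real \<Rightarrow> nat \<Rightarrow> real" where
  "fno_lift F u x i =
     (\<Sum>j<r_width F. RB F i j * relu (RA F j 0 * u x + RA F j 1 * x + Rc F j)) + Rd F i"

definition dft :: "nat \<Rightarrow> (real \<Rightarrow> real) \<Rightarrow> int \<Rightarrow> complex" where
  "dft N g k = (1 / of_nat N) *
     (\<Sum>j=1..N. complex_of_real (g (2 * pi * real j / real N)) * cis (- (of_int k * (2 * pi * real j / real N))))"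

text \<open>Fourier layer l (real part taken of the Fourier terms; bias is real).\<close>
definition fno_layer :: "fno \<Rightarrow> nat \<Rightarrow> nat \<Rightarrow> (real \<Rightarrow> nat \<Rightarrow> real) \<Rightarrow> real \<Rightarrow> nat \<Rightarrow> real" where
  "fno_layer F N l v x i =
     relu ((\<Sum>j<dv F. Wm F l i j * v x j)
       + Re (\<Sum>k\<in>{- int (kmax F)..int (kmax F)}. bhat F l k i * cis (of_int k * x))
       + Re (\<Sum>k\<in>{- int (kmax F)..int (kmax F)}. \<Sum>j<dv F.
               Pm F l k i j * dft N (\<lambda>y. v y j) k * cis (of_int k * x)))"

fun fno_layers :: "fno \<Rightarrow> nat \<Rightarrow> nat \<Rightarrow> (real \<Rightarrow> nat \<Rightarrow> real) \<Rightarrow> real \<Rightarrow> nat \<Rightarrow> real" where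
  "fno_layers F N 0 v = v"
| "fno_layers F N (Suc l) v = fno_layer F N l (fno_layers F N l v)"

definition fno_eval :: "fno \<Rightarrow> nat \<Rightarrow> (real \<Rightarrow> real) \<Rightarrow> real \<Rightarrow> real" where
  "fno_eval F N u x = (\<Sum>i<dv F. Qv F i * fno_layers F N (depth F) (fno_lift F u) x i)"

end

theory Submission
  imports Defs
begin

text \<open>The lifting clips \<open>u / hl\<close> to \<open>[0, 1]\<close>, turning the box input into the indicator of
  \<open>[\<xi> - w/2, \<xi> + w/2]\<close>; the single Fourier layer multiplies mode 1 by \<open>\<pi> cis (- \<theta>)\<close>, so the
  network outputs \<open>Re (cis (x - \<theta>) * \<pi> D)\<close>, where \<open>D\<close> is the first discrete Fourier coefficient of
  the indicator on the grid of spacing \<open>s = 2 \<pi> / N\<close>.  Up to periodicity \<open>N D\<close> is the geometric sum of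
  \<open>cis (- m s)\<close> over the integers \<open>a \<le> m \<le> b\<close> with \<open>m s\<close> in the box, and telescoping gives
  \<open>2 i sin (s/2) N D = cis (- (a - 1/2) s) - cis (- (b + 1/2) s)\<close>.  The half-integer endpoints lie within
  \<open>s/2\<close> of \<open>\<xi> \<plusminus> w/2\<close>, and \<open>N sin (\<pi> / N) = \<pi> + O(N\<^sup>-\<^sup>2)\<close>; comparing with the exact identity
  \<open>cis (- (\<xi> - w/2)) - cis (- (\<xi> + w/2)) = 2 i sin (w/2) cis (- \<xi>)\<close> yields
  \<open>\<pi> D = sin (w/2) cis (- \<xi>) + O(1/N)\<close>, and the rotated real part of \<open>sin (w/2) cis (- \<xi>)\<close> is the target.\<close>

lemma cis_diff_cis:
  "cis p - cis q = 2 * \<i> * complex_of_real (sin ((p - q) / 2)) * cis ((p + q) / 2)"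
proof -
  have "cos p - cos q = - (2 * sin ((p - q) / 2) * sin ((p + q) / 2))"
    using cos_diff_cos[of p q] sin_minus[of "(p - q) / 2"] by (simp add: minus_divide_left)
  then show ?thesis
    using sin_diff_sin[of p q] by (simp add: complex_eq_iff cis.ctr)
qed

lemma norm_cis_diff_le: "cmod (cis p - cis q) \<le> \<bar>p - q\<bar>"
proof -
  have "cmod (cis p - cis q) = 2 * \<bar>sin ((p - q) / 2)\<bar>"
    by (simp add: cis_diff_cis norm_mult)
  also have "\<dots> \<le> \<bar>p - q\<bar>"
    using abs_sin_x_le_abs_x[of "(p - q) / 2"] by simp
  finally show ?thesis .
qed

lemma sum_cis_telescope:
  fixes a b :: int
  assumes "a - 1 \<le> b"
  shows "2 * \<i> * complex_of_real (sin (s / 2)) * (\<Sum>m\<in>{a..b}. cis (- (of_int m * s)))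
           = cis (- ((of_int a - 1 / 2) * s)) - cis (- ((of_int b + 1 / 2) * s))"
  using assms
proof (induction b rule: int_ge_induct)
  case base
  then show ?case by (simp add: algebra_simps)
next
  case (step b)
  have "{a..b + 1} = insert (b + 1) {a..b}"
    using step.hyps by auto
  moreover have "cis (- ((of_int b + 1 / 2) * s)) - cis (- ((of_int (b + 1) + 1 / 2) * s))
      = 2 * \<i> * complex_of_real (sin (s / 2)) * cis (- (of_int (b + 1) * s))"
  proof -
    have "(- ((of_int b + 1 / 2) * s) - - ((of_int (b + 1) + 1 / 2) * s)) / 2 = s / 2"
      "(- ((of_int b + 1 / 2) * s) + - ((of_int (b + 1) + 1 / 2) * s)) / 2 = - (of_int (b + 1) * s)"
      by (simp_all add: field_simps)
    then show ?thesis
      by (simp only: cis_diff_cis)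
  qed
  ultimately show ?case
    using step.IH by (simp add: algebra_simps)
qed

lemma sin_ge_cubic:
  fixes x :: real
  assumes "0 \<le> x"
  shows "x - x ^ 3 / 6 \<le> sin x"
proof -
  have "\<bar>sin x - (\<Sum>m<3. sin_coeff m * x ^ m)\<bar> \<le> inverse (fact 3) * \<bar>x\<bar> ^ 3"
    by (rule Maclaurin_sin_bound)
  moreover have "(\<Sum>m<3. sin_coeff m * x ^ m) = x"
    by (simp add: eval_nat_numeral sin_coeff_def)
  ultimately have "\<bar>sin x - x\<bar> \<le> x ^ 3 / 6"
    using assms by (simp add: eval_nat_numeral)
  then show ?thesis
    by linarith
qed

lemma sum_periodic_window:
  fixes g :: "int \<Rightarrow> 'a::comm_monoid_add" and n a b :: int
  assumes n: "0 < n" and window: "b - a < n"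
    and periodic: "\<And>m k. g (m + k * n) = g m"
  shows "(\<Sum>j | j \<in> {1..n} \<and> (\<exists>k. j - k * n \<in> {a..b}). g j) = (\<Sum>m\<in>{a..b}. g m)"
proof -
  define \<phi> where "\<phi> m = (m - 1) mod n + 1" for m
  have \<phi>_shift: "\<phi> m = m + (- ((m - 1) div n)) * n" for m
    unfolding \<phi>_def by (simp add: minus_div_mult_eq_mod[symmetric] algebra_simps)
  have "bij_betw \<phi> {a..b} {j. j \<in> {1..n} \<and> (\<exists>k. j - k * n \<in> {a..b})}"
  proof (rule bij_betw_imageI)
    show "inj_on \<phi> {a..b}"
    proof (rule inj_onI)
      fix m m' assume "m \<in> {a..b}" "m' \<in> {a..b}" "\<phi> m = \<phi> m'"
      then have "n dvd m - m'" "\<bar>m - m'\<bar> < n"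
        using window by (auto simp: \<phi>_def mod_eq_dvd_iff)
      then show "m = m'"
        using dvd_imp_le_int[of "m - m'" n] by force
    qed
    show "\<phi> ` {a..b} = {j. j \<in> {1..n} \<and> (\<exists>k. j - k * n \<in> {a..b})}"
    proof (intro equalityI subsetI)
      fix j assume "j \<in> \<phi> ` {a..b}"
      then obtain m where "m \<in> {a..b}" "j = \<phi> m" by auto
      moreover have "\<phi> m \<in> {1..n}"
        unfolding \<phi>_def atLeastAtMost_iff
        using pos_mod_bound[OF n, of "m - 1"] pos_mod_sign[OF n, of "m - 1"] by linarith
      ultimately show "j \<in> {j. j \<in> {1..n} \<and> (\<exists>k. j - k * n \<in> {a..b})}"
        using \<phi>_shift[of m] by (auto intro!: exI[of _ "- ((m - 1) div n)"])
    next
      fix j assume "j \<in> {j. j \<in> {1..n} \<and> (\<exists>k. j - k * n \<in> {a..b})}"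
      then obtain k where j: "j \<in> {1..n}" "j - k * n \<in> {a..b}" by auto
      have "\<phi> (j - k * n) = (j - 1) mod n + 1"
        unfolding \<phi>_def by (metis diff_right_commute mod_mult_self1 minus_mult_left diff_conv_add_uminus)
      also have "\<dots> = j"
        using j(1) by simp
      finally show "j \<in> \<phi> ` {a..b}"
        using j(2) by (metis imageI)
    qed
  qed
  then have "(\<Sum>j | j \<in> {1..n} \<and> (\<exists>k. j - k * n \<in> {a..b}). g j) = (\<Sum>m\<in>{a..b}. g (\<phi> m))"
    by (simp add: sum.reindex_bij_betw)
  also have "\<dots> = (\<Sum>m\<in>{a..b}. g m)"
    by (simp only: \<phi>_shift periodic)
  finally show ?thesis .
qed

lemma grid_point_in_interval_iff:
  fixes s c d :: real and r :: int
  assumes "0 < s"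
  shows "\<bar>of_int r * s - c\<bar> \<le> d \<longleftrightarrow> r \<in> {\<lceil>(c - d) / s\<rceil>..\<lfloor>(c + d) / s\<rfloor>}"
proof -
  have "\<bar>of_int r * s - c\<bar> \<le> d \<longleftrightarrow> (c - d) / s \<le> of_int r \<and> of_int r \<le> (c + d) / s"
    using assms by (auto simp: abs_le_iff pos_divide_le_eq pos_le_divide_eq)
  then show ?thesis
    by (simp add: ceiling_le_iff le_floor_iff)
qed

lemma norm_dft_le_one:
  assumes "0 < N" and "\<And>y. \<bar>g y\<bar> \<le> 1"
  shows "cmod (dft N g k) \<le> 1"
proof -
  have "cmod (\<Sum>j=1..N. complex_of_real (g (2 * pi * real j / real N))
                          * cis (- (of_int k * (2 * pi * real j / real N)))) \<le> (\<Sum>j=1..N. 1)"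
    by (rule norm_sum[THEN order_trans], rule sum_mono) (simp add: norm_mult assms(2))
  then show ?thesis
    using assms(1) by (simp add: dft_def norm_divide)
qed

lemma cis_add_2pi_multiple: "cis (x + 2 * pi * of_int k) = cis x"
  by (simp add: cis_mult[symmetric] cis_multiple_2pi)

lemma dft_box:
  fixes N :: nat and w \<xi> :: real
  assumes N: "0 < N" and w: "w < 2 * pi"
  defines "s \<equiv> 2 * pi / real N"
  shows "dft N (\<lambda>y. per_ind w (y - \<xi>)) 1
           = (1 / of_nat N) * (\<Sum>m\<in>{\<lceil>(\<xi> - w / 2) / s\<rceil>..\<lfloor>(\<xi> + w / 2) / s\<rfloor>}. cis (- (of_int m * s)))"
proof -
  define a where "a = \<lceil>(\<xi> - w / 2) / s\<rceil>"
  define b where "b = \<lfloor>(\<xi> + w / 2) / s\<rfloor>"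
  define g where "g m = cis (- (of_int m * s))" for m :: int
  have s: "0 < s" "real N * s = 2 * pi"
    using N by (simp_all add: s_def)
  have "(\<xi> - w / 2) / s \<le> of_int a" "of_int b \<le> (\<xi> + w / 2) / s"
    unfolding a_def b_def by simp_all
  then have "of_int (b - a) \<le> w / s"
    by (simp add: diff_divide_distrib add_divide_distrib)
  then have "of_int (b - a) * s < of_int (int N) * s"
    using s w by (simp add: pos_le_divide_eq)
  then have window: "b - a < int N"
    using s(1) by (simp only: mult_less_cancel_right of_int_less_iff)
  have grid: "per_ind w (of_int j * s - \<xi>) = (if \<exists>k. j - k * int N \<in> {a..b} then 1 else 0)" for j
  proof -
    have "of_int (j - k * int N) * s = of_int j * s - of_int k * (real N * s)" for k
      by (simp add: algebra_simps)
    then have "of_int j * s - \<xi> - 2 * pi * of_int k = of_int (j - k * int N) * s - \<xi>" for k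
      using s(2) by (simp add: mult.commute)
    then have "\<bar>of_int j * s - \<xi> - 2 * pi * of_int k\<bar> \<le> w / 2 \<longleftrightarrow> j - k * int N \<in> {a..b}" for k
      unfolding a_def b_def by (simp only: grid_point_in_interval_iff[OF s(1)])
    then show ?thesis
      by (simp only: per_ind_def)
  qed
  have "(\<Sum>j\<in>{1..int N}. F (of_int j)) = (\<Sum>j=1..N. F (real j))" for F :: "real \<Rightarrow> complex"
    using sum.reindex[of int "{1..N}" "\<lambda>j. F (of_int j)"] by (simp add: image_int_atLeastAtMost)
  from this[of "\<lambda>t. complex_of_real (per_ind w (t * s - \<xi>)) * cis (- (t * s))"]
  have "dft N (\<lambda>y. per_ind w (y - \<xi>)) 1
      = (1 / of_nat N) * (\<Sum>j\<in>{1..int N}. complex_of_real (per_ind w (of_int j * s - \<xi>)) * g j)"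
    unfolding dft_def g_def s_def by (simp add: ac_simps)
  also have "(\<Sum>j\<in>{1..int N}. complex_of_real (per_ind w (of_int j * s - \<xi>)) * g j)
      = (\<Sum>j | j \<in> {1..int N} \<and> (\<exists>k. j - k * int N \<in> {a..b}). g j)"
    unfolding sum.inter_filter[OF finite_atLeastAtMost_int] by (intro sum.cong) (auto simp: grid)
  also have "\<dots> = (\<Sum>m\<in>{a..b}. g m)"
  proof (rule sum_periodic_window)
    show "g (m + k * int N) = g m" for m k
    proof -
      have "- (of_int (m + k * int N) * s) = - (of_int m * s) + 2 * pi * of_int (- k)"
        using s(2) by (simp add: algebra_simps)
      then show ?thesis
        unfolding g_def by (simp only: cis_add_2pi_multiple)
    qed
  qed (use N window in simp_all)
  finally show ?thesis
    unfolding a_def b_def g_def .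
qed

lemma mult_sin_pi_div_le:
  assumes "0 < N"
  shows "real N * sin (pi / real N) \<le> pi"
  using assms sin_x_le_x[of "pi / real N"] by (simp add: field_simps)

lemma pi_minus_mult_sin_pi_div_le:
  assumes "0 < N"
  shows "pi - real N * sin (pi / real N) \<le> pi ^ 3 / (6 * (real N)\<^sup>2)"
proof -
  have "pi / real N - (pi / real N) ^ 3 / 6 \<le> sin (pi / real N)"
    by (rule sin_ge_cubic) simp
  then have "real N * (pi / real N - (pi / real N) ^ 3 / 6) \<le> real N * sin (pi / real N)"
    by (rule mult_left_mono) simp
  moreover have "real N * (pi / real N - (pi / real N) ^ 3 / 6) = pi - pi ^ 3 / (6 * (real N)\<^sup>2)"
    using assms by (simp add: field_simps power2_eq_square power3_eq_cube)
  ultimately show ?thesis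
    by simp
qed

lemma one_le_mult_sin_pi_div:
  assumes "2 \<le> N"
  shows "1 \<le> real N * sin (pi / real N)"
proof -
  have "(2::real)\<^sup>2 \<le> (real N)\<^sup>2"
    using assms by (intro power_mono) simp_all
  then have "pi ^ 3 / (6 * (real N)\<^sup>2) \<le> pi ^ 3 / 24"
    using assms by (intro divide_left_mono) simp_all
  moreover have "1 \<le> pi - pi ^ 3 / 24"
  proof -
    have "0 \<le> (4 - pi) * (pi\<^sup>2 + 4 * pi - 8)"
      using pi_ge_two pi_less_4 power_mono[of 2 pi 2] by simp
    then show ?thesis
      by (simp add: power2_eq_square power3_eq_cube algebra_simps)
  qed
  ultimately show ?thesis
    using pi_minus_mult_sin_pi_div_le[of N] assms by simp
qed

lemma norm_scaled_dft_box_sub_le: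
  fixes N :: nat and w \<xi> :: real
  assumes N: "0 < N" and w: "0 \<le> w" "w < 2 * pi"
  shows "cmod (2 * \<i> * complex_of_real (real N * sin (pi / real N)) * dft N (\<lambda>y. per_ind w (y - \<xi>)) 1
               - (cis (- (\<xi> - w / 2)) - cis (- (\<xi> + w / 2)))) \<le> 2 * pi / real N"
proof -
  define s where "s = 2 * pi / real N"
  define a where "a = \<lceil>(\<xi> - w / 2) / s\<rceil>"
  define b where "b = \<lfloor>(\<xi> + w / 2) / s\<rfloor>"
  have s: "0 < s" "s / 2 = pi / real N"
    using N by (simp_all add: s_def)
  have "(\<xi> - w / 2) / s \<le> of_int a" "of_int a < (\<xi> - w / 2) / s + 1"
    "of_int b \<le> (\<xi> + w / 2) / s" "(\<xi> + w / 2) / s < of_int b + 1"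
    unfolding a_def b_def by linarith+
  then have ab: "\<xi> - w / 2 \<le> of_int a * s" "of_int a * s < \<xi> - w / 2 + s"
    "of_int b * s \<le> \<xi> + w / 2" "\<xi> + w / 2 < of_int b * s + s"
    using s(1) by (simp_all add: field_simps)
  have "of_int (a - 1) * s < of_int (b + 1) * s"
    using ab w(1) by (simp add: algebra_simps)
  then have "a - 1 \<le> b"
    using s(1) by (simp only: mult_less_cancel_right of_int_less_iff) simp
  then have telescope: "2 * \<i> * complex_of_real (sin (pi / real N)) * (\<Sum>m\<in>{a..b}. cis (- (of_int m * s)))
      = cis (- ((of_int a - 1 / 2) * s)) - cis (- ((of_int b + 1 / 2) * s))"
    unfolding s(2)[symmetric] by (rule sum_cis_telescope)
  have "of_nat N * dft N (\<lambda>y. per_ind w (y - \<xi>)) 1 = (\<Sum>m\<in>{a..b}. cis (- (of_int m * s)))"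
    unfolding a_def b_def s_def using N w(2) by (subst dft_box) simp_all
  then have closed_form:
    "2 * \<i> * complex_of_real (real N * sin (pi / real N)) * dft N (\<lambda>y. per_ind w (y - \<xi>)) 1
      = cis (- ((of_int a - 1 / 2) * s)) - cis (- ((of_int b + 1 / 2) * s))"
    unfolding telescope[symmetric] by (simp add: mult_ac)
  have "cmod (cis (- ((of_int a - 1 / 2) * s)) - cis (- ((of_int b + 1 / 2) * s))
                       - (cis (- (\<xi> - w / 2)) - cis (- (\<xi> + w / 2))))
      \<le> cmod (cis (- ((of_int a - 1 / 2) * s)) - cis (- (\<xi> - w / 2)))
          + cmod (cis (- ((of_int b + 1 / 2) * s)) - cis (- (\<xi> + w / 2)))"
    by (rule order_trans[OF _ norm_triangle_ineq4]) (simp add: algebra_simps)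
  moreover have "\<bar>- ((of_int a - 1 / 2) * s) - - (\<xi> - w / 2)\<bar> \<le> s / 2"
    "\<bar>- ((of_int b + 1 / 2) * s) - - (\<xi> + w / 2)\<bar> \<le> s / 2"
    using ab unfolding abs_le_iff by (simp_all add: algebra_simps)
  ultimately show ?thesis
    using norm_cis_diff_le[of "- ((of_int a - 1 / 2) * s)" "- (\<xi> - w / 2)"]
      norm_cis_diff_le[of "- ((of_int b + 1 / 2) * s)" "- (\<xi> + w / 2)"]
    unfolding closed_form s_def by linarith
qed

lemma pi_dft_box_approx_large_grid:
  fixes N :: nat and w \<xi> :: real
  assumes N: "2 \<le> N" and w: "0 \<le> w" "w < 2 * pi"
  shows "cmod (complex_of_real pi * dft N (\<lambda>y. per_ind w (y - \<xi>)) 1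
               - complex_of_real (sin (w / 2)) * cis (- \<xi>)) \<le> 27 / real N"
proof -
  define c where "c = real N * sin (pi / real N)"
  define D where "D = dft N (\<lambda>y. per_ind w (y - \<xi>)) 1"
  define E where "E = cis (- (\<xi> - w / 2)) - cis (- (\<xi> + w / 2))"
  define X where "X = complex_of_real pi * D - complex_of_real (sin (w / 2)) * cis (- \<xi>)"
  have Npos: "0 < real N"
    using N by simp
  have c: "1 \<le> c" "c \<le> pi" "pi - c \<le> pi ^ 3 / (6 * (real N)\<^sup>2)"
    using one_le_mult_sin_pi_div[OF N] mult_sin_pi_div_le[of N] pi_minus_mult_sin_pi_div_le[of N] N
    by (simp_all add: c_def)
  have E: "E = 2 * \<i> * complex_of_real (sin (w / 2)) * cis (- \<xi>)"
    unfolding E_def cis_diff_cis by simp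
  then have "cmod E \<le> 2"
    by (simp add: norm_mult)
  have "cmod (2 * \<i> * complex_of_real c * D - E) \<le> 2 * pi / real N"
    unfolding c_def D_def E_def using N w by (intro norm_scaled_dft_box_sub_le) simp_all
  have "2 * \<i> * complex_of_real c * X
      = complex_of_real pi * (2 * \<i> * complex_of_real c * D - E) + complex_of_real (pi - c) * E"
    unfolding X_def E by (simp add: algebra_simps)
  moreover have "cmod (2 * \<i> * complex_of_real c * X) = 2 * c * cmod X"
    using c(1) by (simp add: norm_mult)
  ultimately have "2 * c * cmod X
      \<le> cmod (complex_of_real pi * (2 * \<i> * complex_of_real c * D - E)) + cmod (complex_of_real (pi - c) * E)"
    by (metis norm_triangle_ineq)
  also have "\<dots> = pi * cmod (2 * \<i> * complex_of_real c * D - E) + (pi - c) * cmod E"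
    using c(2) by (simp only: norm_mult norm_of_real abs_of_nonneg pi_ge_zero diff_ge_0_iff_ge)
  also have "\<dots> \<le> pi * (2 * pi / real N) + (pi - c) * 2"
    using \<open>cmod (2 * \<i> * complex_of_real c * D - E) \<le> 2 * pi / real N\<close> \<open>cmod E \<le> 2\<close> c(2)
    by (intro add_mono mult_left_mono) simp_all
  also have "\<dots> \<le> 2 * pi\<^sup>2 / real N + pi ^ 3 / (6 * real N)"
  proof -
    have "pi ^ 3 / (6 * (real N)\<^sup>2) \<le> pi ^ 3 / (12 * real N)"
      using N by (intro divide_left_mono) (simp_all add: power2_eq_square)
    then show ?thesis
      using c(3) by (simp add: power2_eq_square)
  qed
  also have "\<dots> \<le> 54 / real N"
  proof -
    have "pi\<^sup>2 \<le> 4\<^sup>2" "pi ^ 3 \<le> 4 ^ 3"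
      using pi_less_4 by (intro power_mono; simp)+
    then have "(2 * pi\<^sup>2 + pi ^ 3 / 6) / real N \<le> 54 / real N"
      using Npos by (intro divide_right_mono) simp_all
    moreover have "2 * pi\<^sup>2 / real N + pi ^ 3 / (6 * real N) = (2 * pi\<^sup>2 + pi ^ 3 / 6) / real N"
      using Npos by (simp add: field_simps)
    ultimately show ?thesis
      by simp
  qed
  finally have "2 * c * cmod X \<le> 54 / real N" .
  moreover have "2 * cmod X \<le> 2 * c * cmod X"
    using c(1) by (simp add: mult_right_mono)
  ultimately show ?thesis
    unfolding X_def D_def by simp
qed

lemma pi_dft_box_approx:
  fixes N :: nat and w \<xi> :: real
  assumes N: "0 < N" and w: "0 \<le> w" "w < 2 * pi"
  shows "cmod (complex_of_real pi * dft N (\<lambda>y. per_ind w (y - \<xi>)) 1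
               - complex_of_real (sin (w / 2)) * cis (- \<xi>)) \<le> 27 / real N"
proof (cases "2 \<le> N")
  case True
  then show ?thesis
    using w by (rule pi_dft_box_approx_large_grid)
next
  text \<open>Here \<open>sin (\<pi> / N) = 0\<close>, so the telescoped sum carries no information; the trivial bound suffices.\<close>
  case False
  then have "N = 1"
    using N by simp
  have "cmod (dft N (\<lambda>y. per_ind w (y - \<xi>)) 1) \<le> 1"
    using N by (rule norm_dft_le_one) (simp add: per_ind_def)
  then have "cmod (complex_of_real pi * dft N (\<lambda>y. per_ind w (y - \<xi>)) 1) \<le> pi"
    by (simp add: norm_mult mult_left_le)
  moreover have "cmod (complex_of_real (sin (w / 2)) * cis (- \<xi>)) \<le> 1"
    by (simp add: norm_mult)
  ultimately show ?thesis
    using \<open>N = 1\<close> pi_less_4 norm_triangle_ineq4[of "complex_of_real pi * dft N (\<lambda>y. per_ind w (y - \<xi>)) 1"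
        "complex_of_real (sin (w / 2)) * cis (- \<xi>)"] by simp
qed

text \<open>The lifting channels are \<open>relu (u / hl)\<close> and \<open>relu (u / hl - 1)\<close>; their difference is \<open>u / hl\<close>
  clipped to \<open>[0, 1]\<close>.  The Fourier layer produces \<open>V\<close> and \<open>- V\<close> in two channels, and \<open>Q\<close> recovers
  \<open>V = relu V - relu (- V)\<close>.\<close>
definition box_fno :: "real \<Rightarrow> real \<Rightarrow> fno" where
  "box_fno hl \<theta> = \<lparr>dv = 2, kmax = 1, depth = 1, r_width = 2,
     RA = (\<lambda>j c. if c = 0 then 1 / hl else 0),
     Rc = (\<lambda>j. if j = 0 then 0 else -1),
     RB = (\<lambda>i j. if i = 0 then (if j = 0 then 1 else -1) else 0),
     Rd = (\<lambda>i. 0),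
     Wm = (\<lambda>l i j. 0),
     Pm = (\<lambda>l k i j. if k = 1 \<and> j = 0
                     then (if i = 0 then 1 else -1) * complex_of_real pi * cis (- \<theta>) else 0),
     bhat = (\<lambda>l k i. 0),
     Qv = (\<lambda>i. if i = 0 then 1 else -1)\<rparr>"

lemma box_fno_sel:
  "dv (box_fno hl \<theta>) = 2" "kmax (box_fno hl \<theta>) = 1" "depth (box_fno hl \<theta>) = 1"
  "Wm (box_fno hl \<theta>) = (\<lambda>l i j. 0)" "bhat (box_fno hl \<theta>) = (\<lambda>l k i. 0)"
  "Pm (box_fno hl \<theta>) = (\<lambda>l k i j. if k = 1 \<and> j = 0
                     then (if i = 0 then 1 else -1) * complex_of_real pi * cis (- \<theta>) else 0)"
  "Qv (box_fno hl \<theta>) = (\<lambda>i. if i = 0 then 1 else -1)"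
  by (simp_all add: box_fno_def)

lemma fno_size_box_fno: "fno_size (box_fno hl \<theta>) = 54"
  by (simp add: box_fno_def fno_size_def)

lemma fno_lift_box_fno:
  assumes "0 < hl" "hl \<le> h"
  shows "fno_lift (box_fno hl \<theta>) (box_input h w \<xi>) y 0 = per_ind w (y - \<xi>)"
proof -
  have "1 \<le> h / hl"
    using assms by simp
  then show ?thesis
    by (simp add: fno_lift_def box_fno_def box_input_def relu_def per_ind_def numeral_2_eq_2 lessThan_Suc)
qed

lemma fno_eval_box_fno:
  assumes "0 < hl" "hl \<le> h"
  shows "fno_eval (box_fno hl \<theta>) N (box_input h w \<xi>) x
           = Re (cis (x - \<theta>) * (complex_of_real pi * dft N (\<lambda>y. per_ind w (y - \<xi>)) 1))"
    (is "_ = ?V")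
proof -
  have lift: "(\<lambda>y. fno_lift (box_fno hl \<theta>) (box_input h w \<xi>) y 0) = (\<lambda>y. per_ind w (y - \<xi>))"
    using fno_lift_box_fno[OF assms] by simp
  have modes: "{- 1..1} = {- 1, 0, 1 :: int}"
    by auto
  have "(\<Sum>k\<in>{- int (kmax (box_fno hl \<theta>))..int (kmax (box_fno hl \<theta>))}. \<Sum>j<dv (box_fno hl \<theta>).
          Pm (box_fno hl \<theta>) 0 k i j
          * dft N (\<lambda>y. fno_lift (box_fno hl \<theta>) (box_input h w \<xi>) y j) k * cis (of_int k * x))
      = (if i = 0 then 1 else -1) * (cis (- \<theta>) * cis x
          * (complex_of_real pi * dft N (\<lambda>y. per_ind w (y - \<xi>)) 1))" for i
    unfolding box_fno_sel by (simp add: modes numeral_2_eq_2 lessThan_Suc lift mult_ac)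
  moreover have "cis (- \<theta>) * cis x = cis (x - \<theta>)"
    by (simp add: cis_mult)
  ultimately have "fno_layer (box_fno hl \<theta>) N 0 (fno_lift (box_fno hl \<theta>) (box_input h w \<xi>)) x i
      = relu ((if i = 0 then 1 else -1) * ?V)" for i
    unfolding fno_layer_def box_fno_sel by simp
  then show ?thesis
    by (simp add: fno_eval_def box_fno_sel numeral_2_eq_2 lessThan_Suc relu_def)
qed

lemma fno_eval_box_fno_error:
  assumes "0 < hl" "hl \<le> h"
  shows "fno_eval (box_fno hl \<theta>) N (box_input h w \<xi>) x - sin (w / 2) * cos (x - \<xi> - \<theta>)
           = Re (cis (x - \<theta>) * (complex_of_real pi * dft N (\<lambda>y. per_ind w (y - \<xi>)) 1
                                    - complex_of_real (sin (w / 2)) * cis (- \<xi>)))"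
proof -
  have "cis (x - \<theta>) * cis (- \<xi>) = cis (x - \<xi> - \<theta>)"
    using cis_mult[of "x - \<theta>" "- \<xi>"] by (simp add: algebra_simps)
  then have rotate: "cis (x - \<theta>) * (complex_of_real (sin (w / 2)) * cis (- \<xi>))
          = complex_of_real (sin (w / 2)) * cis (x - \<xi> - \<theta>)"
    by (simp add: mult.left_commute)
  have "sin (w / 2) * cos (x - \<xi> - \<theta>)
      = Re (cis (x - \<theta>) * (complex_of_real (sin (w / 2)) * cis (- \<xi>)))"
    unfolding rotate by simp
  then show ?thesis
    unfolding fno_eval_box_fno[OF assms] by (simp only: right_diff_distrib minus_complex.sel)
qed

theorem mainTheorem11:
  fixes \<theta> hl hu wl wu :: real
  assumes "0 < hl" "hl \<le> hu" "0 < wl" "wl \<le> wu" "wu < 2 * pi"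
  shows "\<exists>C>0. \<forall>N::nat. N > 0 \<longrightarrow>
           (\<exists>F::fno. kmax F = 1 \<and> real (dv F) \<le> C \<and> real (depth F) \<le> C
              \<and> real (fno_size F) \<le> C
              \<and> (\<forall>h\<in>{hl..hu}. \<forall>w\<in>{wl..wu}. \<forall>\<xi>\<in>{0..2*pi}. \<forall>x\<in>{0..2*pi}.
                   \<bar>fno_eval F N (box_input h w \<xi>) x - sin (w / 2) * cos (x - \<xi> - \<theta>)\<bar> \<le> C / real N))"
proof (intro exI[of _ 54] conjI allI impI exI[of _ "box_fno hl \<theta>"] ballI)
  fix N :: nat and h w \<xi> x :: real
  assume N: "0 < N" and h: "h \<in> {hl..hu}" and w: "w \<in> {wl..wu}"
  define X where "X = complex_of_real pi * dft N (\<lambda>y. per_ind w (y - \<xi>)) 1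
                      - complex_of_real (sin (w / 2)) * cis (- \<xi>)"
  have "\<bar>fno_eval (box_fno hl \<theta>) N (box_input h w \<xi>) x - sin (w / 2) * cos (x - \<xi> - \<theta>)\<bar>
      = \<bar>Re (cis (x - \<theta>) * X)\<bar>"
    unfolding X_def using assms(1) h by (subst fno_eval_box_fno_error) simp_all
  also have "\<dots> \<le> cmod X"
    using abs_Re_le_cmod[of "cis (x - \<theta>) * X"] by (simp add: norm_mult)
  also have "\<dots> \<le> 27 / real N"
    unfolding X_def using N assms w by (intro pi_dft_box_approx) auto
  also have "\<dots> \<le> 54 / real N"
    by (simp add: divide_right_mono)
  finally show "\<bar>fno_eval (box_fno hl \<theta>) N (box_input h w \<xi>) x - sin (w / 2) * cos (x - \<xi> - \<theta>)\<bar>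
      \<le> 54 / real N" .
qed (simp_all add: box_fno_sel fno_size_box_fno)

end
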